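(* Let $\lambda$ be a complex algebraic number of degree $d$ and height $H$, and assume $|\lambda|\neq 1$. Then \[ \big||\lambda|-1\big| > \frac{1}{\sqrt{3}\,(2d+2)^{2d+3}\,2^{2d}\,(d!)^{2d}\,(d+1)^{2d(d-1)}\,H^{2d^2}}. \] In particular, if the minimal polynomial of $\lambda$ has degree at most $d$ and coefficients of bitsize at most $\tau$, then $\big||\lambda|-1\big| > 2^{-(\tau d)^{O(1)}}$.
   Context: The minimal polynomial of an algebraic number $\mu$ is the unique irreducible polynomial $p_\mu\in\mathbb{Z}[x]$ with pairwise coprime coefficients (and positive leading coefficient) vanishing at $\mu$. The height of $\mu$ is the maximum absolute value of the coefficients of $p_\mu$; the degree of $\mu$ is the degree of $p_\mu$. *)

theory Defs
  imports "HOL-Computational_Algebra.Computational_Algebra"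
begin

definition is_min_int_poly :: "int poly \<Rightarrow> complex \<Rightarrow> bool" where
  "is_min_int_poly p x \<longleftrightarrow>
     p \<noteq> 0 \<and> poly (map_poly of_int p) x = 0 \<and> irreducible p \<and>
     content p = 1 \<and> lead_coeff p > 0"

definition int_poly_height :: "int poly \<Rightarrow> int" where
  "int_poly_height p = Max ((\<lambda>i. \<bar>coeff p i\<bar>) ` {..degree p})"

end

theory Submission
  imports Defs "Jordan_Normal_Form.Jordan_Normal_Form"
begin

text \<open>If \<open>x\<close> is a root of \<open>p\<close> with leading coefficient \<open>a\<close>, then \<open>a x\<close> and \<open>a (cnj x)\<close> are
  eigenvalues of an integer \<open>d \<times> d\<close> matrix with entries bounded by \<open>H\<close> (a scaled companion
  matrix), so \<open>a^2 |x|^2\<close> is an eigenvalue of its Kronecker square, an integer \<open>d^2 \<times> d^2\<close>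
  matrix. Its characteristic polynomial is monic over the integers with all roots of modulus at
  most \<open>d^2 H^2\<close>; after removing the factor \<open>(X - a^2)^k\<close> its value at the integer \<open>a^2\<close> is a
  nonzero integer, while the product over the roots bounds it by
  \<open>a^2 |1 - |x|^2| ((d^2 + 1) H^2)^(d^2 - 1)\<close>. Finally \<open>|1 - |x|^2| \<le> 3 ||x| - 1|\<close> unless
  \<open>|x| > 2\<close>, and the resulting bound is stronger than the stated one.\<close>

lemma eigenvalue_norm_le:
  fixes A :: "complex mat"
  assumes A: "A \<in> carrier_mat n n"
    and entries: "\<And>i j. i < n \<Longrightarrow> j < n \<Longrightarrow> cmod (A $$ (i,j)) \<le> R"
    and "eigenvalue A e"
  shows "cmod e \<le> real n * R"
proof -
  from assms(3) obtain v where v: "v \<in> carrier_vec n" "v \<noteq> 0\<^sub>v n" "A *\<^sub>v v = e \<cdot>\<^sub>v v"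
    unfolding eigenvalue_def eigenvector_def using A by auto
  have "{..<n} \<noteq> {}" using v by (auto simp: vec_eq_iff)
  define M where "M = Max ((\<lambda>j. cmod (v $ j)) ` {..<n})"
  have "M \<in> (\<lambda>j. cmod (v $ j)) ` {..<n}"
    unfolding M_def using \<open>{..<n} \<noteq> {}\<close> by (intro Max_in) auto
  then obtain i where i: "i < n" "cmod (v $ i) = M" by auto
  have M_ge: "cmod (v $ j) \<le> M" if "j < n" for j
    unfolding M_def using that by (intro Max_ge) auto
  have "M > 0"
  proof (rule ccontr)
    assume "\<not> M > 0"
    then have "\<forall>j<n. v $ j = 0" using M_ge by (metis norm_le_zero_iff order_trans not_less)
    then show False using v by (auto simp: vec_eq_iff)
  qed
  have "R \<ge> 0" using entries[OF i(1) i(1)] norm_ge_zero order_trans by blast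
  have row: "e * v $ i = (\<Sum>j<n. A $$ (i,j) * v $ j)"
  proof -
    have "e * v $ i = (A *\<^sub>v v) $ i" using v i by simp
    also have "\<dots> = (\<Sum>j<n. A $$ (i,j) * v $ j)"
      using A v(1) i unfolding mult_mat_vec_def scalar_prod_def by (auto simp: lessThan_atLeast0)
    finally show ?thesis .
  qed
  have "cmod e * M = cmod (e * v $ i)" using i by (simp add: norm_mult)
  also have "\<dots> \<le> (\<Sum>j<n. cmod (A $$ (i,j) * v $ j))" unfolding row by (rule norm_sum)
  also have "\<dots> \<le> (\<Sum>j<n. R * M)"
    using entries M_ge i \<open>R \<ge> 0\<close> by (intro sum_mono) (simp add: norm_mult mult_mono)
  finally show ?thesis using \<open>M > 0\<close> by simp
qed

lemma norm_poly_le_of_roots_bounded: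
  fixes g :: "complex poly"
  assumes "lead_coeff g = 1" and "\<And>r. poly g r = 0 \<Longrightarrow> cmod r \<le> R"
  shows "cmod (poly g c) \<le> (cmod c + R) ^ degree g"
proof -
  obtain rs where rs: "Polynomial.smult (lead_coeff g) (\<Prod>a\<leftarrow>rs. [:- a, 1:]) = g" "length rs = degree g"
    using fundamental_theorem_algebra_factorized by blast
  have poly_g: "poly g z = (\<Prod>r\<leftarrow>rs. z - r)" for z
    using rs(1) assms(1) by (auto simp: poly_prod_list o_def)
  have "cmod (c - r) \<le> cmod c + R" if "r \<in> set rs" for r
  proof -
    have "poly g r = 0" unfolding poly_g using that by (auto simp: prod_list_zero_iff)
    then show ?thesis using assms(2) norm_triangle_ineq4[of c r] by fastforce
  qed
  then have "cmod (\<Prod>r\<leftarrow>rs. c - r) \<le> (cmod c + R) ^ length rs"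
  proof (induction rs)
    case (Cons r rs)
    then show ?case
      by (auto simp: norm_mult intro!: mult_mono order_trans[OF norm_ge_zero])
  qed simp
  then show ?thesis using rs(2) poly_g by simp
qed

lemma norm_poly_le_dist_root_mult:
  fixes h :: "complex poly"
  assumes "lead_coeff h = 1" and "poly h \<nu> = 0" and roots: "\<And>r. poly h r = 0 \<Longrightarrow> cmod r \<le> R"
  shows "cmod (poly h c) \<le> cmod (c - \<nu>) * (cmod c + R) ^ (degree h - 1)"
proof -
  obtain g where h: "h = [:- \<nu>, 1:] * g" using assms(2) by (metis dvdE poly_eq_0_iff_dvd)
  have "lead_coeff ([:- \<nu>, 1:] * g) = lead_coeff g" by (subst lead_coeff_mult) simp
  then have "lead_coeff g = 1" using assms(1) h by simp
  then have "degree h = degree g + 1" unfolding h by (subst degree_mult_eq) auto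
  have "cmod (poly g c) \<le> (cmod c + R) ^ degree g"
    by (rule norm_poly_le_of_roots_bounded[OF \<open>lead_coeff g = 1\<close>]) (use roots h in simp)
  then show ?thesis
    using \<open>degree h = degree g + 1\<close> by (simp add: h norm_mult mult_left_mono flip: left_diff_distrib)
qed

lemma monic_int_poly_root_separation:
  fixes f :: "int poly" and \<nu> :: complex
  assumes monic: "lead_coeff f = 1"
    and roots: "\<And>r. poly (map_poly of_int f) r = 0 \<Longrightarrow> cmod r \<le> R"
    and root: "poly (map_poly of_int f) \<nu> = 0" and "\<nu> \<noteq> of_int b"
    and K: "\<bar>real_of_int b\<bar> + R \<le> K" "1 \<le> K"
  shows "1 \<le> cmod (of_int b - \<nu>) * K ^ (degree f - 1)"
proof -
  have "0 \<le> R" using roots[OF root] norm_ge_zero order_trans by blast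
  have "f \<noteq> 0" using monic by auto
  then obtain q where f: "f = [:- b, 1:] ^ order b f * q" and "\<not> [:- b, 1:] dvd q"
    using order_decomp by blast
  then have "poly q b \<noteq> 0" by (simp add: poly_eq_0_iff_dvd)
  have "lead_coeff ([:- b, 1:] ^ order b f * q) = lead_coeff q"
    by (simp add: lead_coeff_mult lead_coeff_power)
  then have "lead_coeff q = 1" using monic unfolding f[symmetric] by simp
  define qC where "qC = (map_poly of_int q :: complex poly)"
  have fC: "map_poly of_int f = [:- of_int b, 1:] ^ order b f * qC"
    unfolding qC_def by (subst f) (simp add: of_int_poly_hom.hom_mult of_int_poly_hom.hom_power)
  have "lead_coeff qC = 1" unfolding qC_def using \<open>lead_coeff q = 1\<close> by simp
  have "degree qC \<le> degree f"
  proof -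
    have "degree (map_poly (of_int :: int \<Rightarrow> complex) f)
        = degree ([:- of_int b, 1:] ^ order b f :: complex poly) + degree qC"
      unfolding fC using \<open>lead_coeff qC = 1\<close> by (intro degree_mult_eq) auto
    then show ?thesis by simp
  qed
  have "poly qC \<nu> = 0" using root \<open>\<nu> \<noteq> of_int b\<close> fC by simp
  have "1 \<le> \<bar>poly q b\<bar>" using \<open>poly q b \<noteq> 0\<close> by linarith
  then have "1 \<le> cmod (poly qC (of_int b))"
    unfolding qC_def of_int_hom.poly_map_poly by (metis norm_of_int of_int_1 of_int_abs of_int_le_iff)
  also have "\<dots> \<le> cmod (of_int b - \<nu>) * (cmod (of_int b :: complex) + R) ^ (degree qC - 1)"
    by (rule norm_poly_le_dist_root_mult[OF \<open>lead_coeff qC = 1\<close> \<open>poly qC \<nu> = 0\<close>])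
      (use roots fC in simp)
  also have "\<dots> \<le> cmod (of_int b - \<nu>) * K ^ (degree f - 1)"
    using K \<open>0 \<le> R\<close> \<open>degree qC \<le> degree f\<close>
    by (intro mult_left_mono order_trans[OF power_mono power_increasing]) auto
  finally show ?thesis .
qed

lemma int_mat_eigenvalue_separation:
  fixes N :: "int mat" and \<nu> :: complex
  assumes N: "N \<in> carrier_mat n n"
    and entries: "\<And>i j. i < n \<Longrightarrow> j < n \<Longrightarrow> \<bar>N $$ (i,j)\<bar> \<le> h"
    and "eigenvalue (map_mat of_int N) \<nu>" and "\<nu> \<noteq> of_int b"
    and "\<bar>real_of_int b\<bar> + real n * real_of_int h \<le> K" and "1 \<le> K"
  shows "1 \<le> cmod (of_int b - \<nu>) * K ^ (n - 1)"
proof -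
  define NC where "NC = (map_mat of_int N :: complex mat)"
  have NC: "NC \<in> carrier_mat n n" using N by (simp add: NC_def)
  have char_poly: "map_poly of_int (char_poly N) = char_poly NC"
    unfolding NC_def by (rule of_int_hom.char_poly_hom[OF N, symmetric])
  have root_iff: "poly (map_poly of_int (char_poly N)) r = 0 \<longleftrightarrow> eigenvalue NC r" for r
    unfolding char_poly eigenvalue_root_char_poly[OF NC] ..
  have "cmod (NC $$ (i,j)) \<le> real_of_int h" if "i < n" "j < n" for i j
    using entries[OF that] that N unfolding NC_def by simp
  then have "cmod r \<le> real n * real_of_int h" if "eigenvalue NC r" for r
    using eigenvalue_norm_le[OF NC] that by blast
  moreover have "degree (char_poly N) = n" "lead_coeff (char_poly N) = 1"
    using degree_monic_char_poly[OF N] by auto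
  ultimately show ?thesis
    using monic_int_poly_root_separation[of "char_poly N" "real n * real_of_int h" \<nu> b K] assms(3-)
    unfolding root_iff NC_def by auto
qed

lemma mult_add_less_mult:
  fixes i j m n :: nat
  assumes "i < m" and "j < n"
  shows "i * n + j < m * n"
proof -
  have "i * n + j < Suc i * n" using assms(2) by simp
  also have "\<dots> \<le> m * n" using assms(1) by (intro mult_right_mono) auto
  finally show ?thesis .
qed

lemma div_mod_less_of_less_mult:
  fixes i m n :: nat
  assumes "i < m * n"
  shows "i div n < m" and "i mod n < n"
  using assms by (auto simp: less_mult_imp_div_less, cases n) auto

lemma sum_lessThan_mult_div_mod:
  fixes g :: "nat \<Rightarrow> nat \<Rightarrow> 'a::comm_monoid_add"
  shows "(\<Sum>c<m * d. g (c div d) (c mod d)) = (\<Sum>i<m. \<Sum>j<d. g i j)"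
proof -
  have "(\<Sum>c<m * d. g (c div d) (c mod d)) = (\<Sum>(i, j)\<in>{..<m} \<times> {..<d}. g i j)"
    by (intro sum.reindex_bij_witness[where i = "\<lambda>(i, j). i * d + j" and j = "\<lambda>c. (c div d, c mod d)"])
      (auto simp: mult_add_less_mult div_mod_less_of_less_mult)
  then show ?thesis by (simp add: sum.cartesian_product)
qed

definition kronecker_mat :: "'a :: times mat \<Rightarrow> 'a mat \<Rightarrow> 'a mat" where
  "kronecker_mat A B = mat (dim_row A * dim_row B) (dim_col A * dim_col B)
     (\<lambda>(i, j). A $$ (i div dim_row B, j div dim_col B) * B $$ (i mod dim_row B, j mod dim_col B))"

definition kronecker_vec :: "'a :: times vec \<Rightarrow> 'a vec \<Rightarrow> 'a vec" where
  "kronecker_vec u w = vec (dim_vec u * dim_vec w) (\<lambda>i. u $ (i div dim_vec w) * w $ (i mod dim_vec w))"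

lemma mult_mat_vec_kronecker:
  fixes A B :: "'a :: comm_semiring_0 mat"
  assumes A: "A \<in> carrier_mat m n" and B: "B \<in> carrier_mat m' n'"
    and u: "u \<in> carrier_vec n" and w: "w \<in> carrier_vec n'"
  shows "kronecker_mat A B *\<^sub>v kronecker_vec u w = kronecker_vec (A *\<^sub>v u) (B *\<^sub>v w)"
proof (rule eq_vecI)
  fix i assume "i < dim_vec (kronecker_vec (A *\<^sub>v u) (B *\<^sub>v w))"
  then have i: "i < m * m'" using A B by (simp add: kronecker_vec_def)
  then have "i div m' < m" "i mod m' < m'" by (rule div_mod_less_of_less_mult)+
  have "(kronecker_mat A B *\<^sub>v kronecker_vec u w) $ i
      = (\<Sum>c<n * n'. (A $$ (i div m', c div n') * u $ (c div n')) * (B $$ (i mod m', c mod n') * w $ (c mod n')))"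
    using A B u w i
    by (auto simp: kronecker_mat_def kronecker_vec_def mult_mat_vec_def scalar_prod_def lessThan_atLeast0
        ac_simps intro!: sum.cong)
  also have "\<dots> = (\<Sum>a<n. A $$ (i div m', a) * u $ a) * (\<Sum>b<n'. B $$ (i mod m', b) * w $ b)"
    using sum_lessThan_mult_div_mod[where m = n and d = n'
        and g = "\<lambda>a b. (A $$ (i div m', a) * u $ a) * (B $$ (i mod m', b) * w $ b)"]
    by (simp add: sum_product)
  also have "\<dots> = kronecker_vec (A *\<^sub>v u) (B *\<^sub>v w) $ i"
    using A B u w i \<open>i div m' < m\<close> \<open>i mod m' < m'\<close>
    by (simp add: kronecker_vec_def mult_mat_vec_def scalar_prod_def lessThan_atLeast0)
  finally show "(kronecker_mat A B *\<^sub>v kronecker_vec u w) $ i = kronecker_vec (A *\<^sub>v u) (B *\<^sub>v w) $ i" .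
qed (use A B in \<open>simp add: kronecker_mat_def kronecker_vec_def\<close>)

lemma eigenvalue_kronecker_mat:
  fixes A B :: "'a :: idom mat"
  assumes A: "A \<in> carrier_mat m m" and B: "B \<in> carrier_mat m' m'"
    and "eigenvalue A \<alpha>" and "eigenvalue B \<beta>"
  shows "eigenvalue (kronecker_mat A B) (\<alpha> * \<beta>)"
proof -
  obtain u w where u: "u \<in> carrier_vec m" "u \<noteq> 0\<^sub>v m" "A *\<^sub>v u = \<alpha> \<cdot>\<^sub>v u"
    and w: "w \<in> carrier_vec m'" "w \<noteq> 0\<^sub>v m'" "B *\<^sub>v w = \<beta> \<cdot>\<^sub>v w"
    using assms unfolding eigenvalue_def eigenvector_def by auto
  obtain i j where "i < m" "u $ i \<noteq> 0" "j < m'" "w $ j \<noteq> 0"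
    using u w by (metis carrier_vecD eq_vecI index_zero_vec)
  have "i * m' + j < m * m'" using \<open>i < m\<close> \<open>j < m'\<close> by (rule mult_add_less_mult)
  then have "kronecker_vec u w $ (i * m' + j) \<noteq> 0"
    using u w \<open>j < m'\<close> \<open>u $ i \<noteq> 0\<close> \<open>w $ j \<noteq> 0\<close> by (simp add: kronecker_vec_def)
  then have "kronecker_vec u w \<noteq> 0\<^sub>v (m * m')"
    using \<open>i * m' + j < m * m'\<close> by auto
  moreover have "kronecker_mat A B *\<^sub>v kronecker_vec u w = (\<alpha> * \<beta>) \<cdot>\<^sub>v kronecker_vec u w"
    unfolding mult_mat_vec_kronecker[OF A B u(1) w(1)] u(3) w(3)
    using u w by (intro eq_vecI) (auto simp: kronecker_vec_def div_mod_less_of_less_mult)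
  ultimately show ?thesis
    using A B u w unfolding eigenvalue_def eigenvector_def
    by (auto simp: kronecker_mat_def kronecker_vec_def intro!: exI[of _ "kronecker_vec u w"])
qed

lemma abs_kronecker_mat_le:
  fixes A B :: "'a :: linordered_idom mat"
  assumes A: "A \<in> carrier_mat m n" and B: "B \<in> carrier_mat m' n'"
    and "\<And>i j. i < m \<Longrightarrow> j < n \<Longrightarrow> \<bar>A $$ (i, j)\<bar> \<le> h"
    and "\<And>i j. i < m' \<Longrightarrow> j < n' \<Longrightarrow> \<bar>B $$ (i, j)\<bar> \<le> h'"
    and "i < m * m'" and "j < n * n'"
  shows "\<bar>kronecker_mat A B $$ (i, j)\<bar> \<le> h * h'"
proof -
  have "0 \<le> h"
    using assms(3)[OF div_mod_less_of_less_mult(1)[OF assms(5)] div_mod_less_of_less_mult(1)[OF assms(6)]]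
    by linarith
  have "\<bar>kronecker_mat A B $$ (i, j)\<bar> = \<bar>A $$ (i div m', j div n')\<bar> * \<bar>B $$ (i mod m', j mod n')\<bar>"
    using A B assms(5,6) by (simp add: kronecker_mat_def abs_mult)
  also have "\<dots> \<le> h * h'"
    using assms(3-6) \<open>0 \<le> h\<close> by (intro mult_mono) (auto simp: div_mod_less_of_less_mult)
  finally show ?thesis .
qed

lemma map_mat_kronecker_mat:
  assumes "\<And>x y. h (x * y) = h x * h y"
  shows "map_mat h (kronecker_mat A B) = kronecker_mat (map_mat h A) (map_mat h B)"
  using assms by (intro eq_matI) (auto simp: kronecker_mat_def div_mod_less_of_less_mult)

text \<open>\<open>lead_coeff p\<close> times the companion matrix of \<open>p / lead_coeff p\<close>; the scaling keeps the
  matrix of an integer polynomial integral.\<close>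
definition scaled_companion_mat :: "'a :: comm_ring_1 poly \<Rightarrow> 'a mat" where
  "scaled_companion_mat p = mat (degree p) (degree p)
     (\<lambda>(r, c). if Suc r < degree p then (if c = Suc r then lead_coeff p else 0) else - coeff p c)"

lemma scaled_companion_mat_carrier: "scaled_companion_mat p \<in> carrier_mat (degree p) (degree p)"
  by (simp add: scaled_companion_mat_def)

lemma eigenvalue_scaled_companion_mat:
  fixes p :: "'a :: comm_ring_1 poly"
  assumes "degree p > 0" and "poly p z = 0"
  shows "eigenvalue (scaled_companion_mat p) (lead_coeff p * z)"
proof -
  define d where "d = degree p"
  define v where "v = vec d (\<lambda>c. z ^ c)"
  have row: "(\<Sum>c<d. scaled_companion_mat p $$ (r, c) * z ^ c) = lead_coeff p * z ^ Suc r"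
    if "r < d" for r
  proof (cases "Suc r < d")
    case True
    then have "(\<Sum>c<d. scaled_companion_mat p $$ (r, c) * z ^ c)
        = (\<Sum>c<d. if c = Suc r then lead_coeff p * z ^ c else 0)"
      using that by (intro sum.cong) (auto simp: scaled_companion_mat_def d_def)
    then show ?thesis using True by simp
  next
    case False
    then have "d = Suc r" using that by simp
    have "0 = (\<Sum>c\<le>d. coeff p c * z ^ c)"
      using assms(2) unfolding poly_altdef d_def by simp
    also have "\<dots> = (\<Sum>c<d. coeff p c * z ^ c) + lead_coeff p * z ^ d"
      unfolding d_def by (simp add: lessThan_Suc_atMost[symmetric])
    finally have "(\<Sum>c<d. - coeff p c * z ^ c) = lead_coeff p * z ^ d"
      by (simp add: sum_negf add_eq_0_iff2 add.commute)
    moreover have "(\<Sum>c<d. scaled_companion_mat p $$ (r, c) * z ^ c) = (\<Sum>c<d. - coeff p c * z ^ c)"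
      using that False by (intro sum.cong) (auto simp: scaled_companion_mat_def d_def)
    ultimately show ?thesis using \<open>d = Suc r\<close> by simp
  qed
  have "scaled_companion_mat p *\<^sub>v v = (lead_coeff p * z) \<cdot>\<^sub>v v"
  proof (rule eq_vecI)
    fix r assume "r < dim_vec ((lead_coeff p * z) \<cdot>\<^sub>v v)"
    then have "r < d" by (simp add: v_def)
    then show "(scaled_companion_mat p *\<^sub>v v) $ r = ((lead_coeff p * z) \<cdot>\<^sub>v v) $ r"
      using row[OF \<open>r < d\<close>] scaled_companion_mat_carrier[of p]
      by (simp add: v_def d_def mult_mat_vec_def scalar_prod_def lessThan_atLeast0 algebra_simps)
  qed (simp add: v_def d_def scaled_companion_mat_def)
  moreover have "v \<noteq> 0\<^sub>v d"
  proof
    assume "v = 0\<^sub>v d"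
    then have "v $ 0 = 0" using assms(1) by (simp add: d_def)
    then show False using assms(1) by (simp add: v_def d_def)
  qed
  ultimately show ?thesis
    unfolding eigenvalue_def eigenvector_def
    by (auto simp: v_def d_def scaled_companion_mat_def intro!: exI[of _ v])
qed

lemma of_int_scaled_companion_mat:
  "map_mat of_int (scaled_companion_mat p) = scaled_companion_mat (map_poly (of_int :: int \<Rightarrow> 'a :: {comm_ring_1, ring_char_0}) p)"
  by (auto simp: scaled_companion_mat_def)

lemma eigenvalue_kronecker_scaled_companion_mat:
  fixes p :: "int poly" and x :: complex
  assumes "degree p > 0" and "poly (map_poly of_int p) x = 0"
  shows "eigenvalue (map_mat of_int (kronecker_mat (scaled_companion_mat p) (scaled_companion_mat p)))
           (of_real ((real_of_int (lead_coeff p) * cmod x) ^ 2) :: complex)"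
proof -
  define pC where "pC = (map_poly of_int p :: complex poly)"
  have "degree pC > 0" using assms(1) by (simp add: pC_def)
  have "poly pC (cnj x) = cnj (poly pC x)"
    by (rule poly_cnj_real[symmetric]) (simp add: pC_def coeff_map_poly)
  then have "poly pC (cnj x) = 0" using assms(2) by (simp add: pC_def)
  have "eigenvalue (kronecker_mat (scaled_companion_mat pC) (scaled_companion_mat pC))
      ((lead_coeff pC * x) * (lead_coeff pC * cnj x))"
    using eigenvalue_scaled_companion_mat[OF \<open>degree pC > 0\<close>] assms(2) \<open>poly pC (cnj x) = 0\<close>
    by (intro eigenvalue_kronecker_mat[OF scaled_companion_mat_carrier scaled_companion_mat_carrier])
      (auto simp: pC_def)
  moreover have "(lead_coeff pC * x) * (lead_coeff pC * cnj x)
      = of_real ((real_of_int (lead_coeff p) * cmod x) ^ 2)"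
  proof -
    have "(lead_coeff pC * x) * (lead_coeff pC * cnj x) = of_int (lead_coeff p) ^ 2 * (x * cnj x)"
      by (simp add: pC_def power2_eq_square ac_simps)
    then show ?thesis by (simp add: power_mult_distrib flip: complex_norm_square)
  qed
  ultimately show ?thesis
    by (simp add: map_mat_kronecker_mat of_int_scaled_companion_mat pC_def)
qed

lemma abs_coeff_le_int_poly_height: "\<bar>coeff p i\<bar> \<le> int_poly_height p"
proof (cases "i \<le> degree p")
  case True
  then show ?thesis unfolding int_poly_height_def by (intro Max_ge) auto
next
  case False
  then have "coeff p i = 0" by (simp add: coeff_eq_0)
  moreover have "\<bar>coeff p 0\<bar> \<le> int_poly_height p" unfolding int_poly_height_def by (intro Max_ge) auto
  ultimately show ?thesis by simp
qed

lemma one_le_int_poly_height: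
  assumes "p \<noteq> 0"
  shows "1 \<le> int_poly_height p"
proof -
  have "lead_coeff p \<noteq> 0" using assms by simp
  then show ?thesis using abs_coeff_le_int_poly_height[of p "degree p"] by linarith
qed

lemma lead_coeff_sq_le_int_poly_height_sq:
  "real_of_int (lead_coeff p) ^ 2 \<le> real_of_int (int_poly_height p) ^ 2"
proof -
  have "\<bar>real_of_int (lead_coeff p)\<bar> \<le> real_of_int (int_poly_height p)"
    using abs_coeff_le_int_poly_height[of p "degree p"] by (metis of_int_abs of_int_le_iff)
  then have "\<bar>real_of_int (lead_coeff p)\<bar> ^ 2 \<le> real_of_int (int_poly_height p) ^ 2"
    by (rule power_mono) simp
  then show ?thesis by simp
qed

lemma degree_pos_of_int_poly_root:
  fixes p :: "int poly" and x :: complex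
  assumes "p \<noteq> 0" and "poly (map_poly of_int p) x = 0"
  shows "degree p > 0"
proof (rule ccontr)
  assume "\<not> degree p > 0"
  then obtain c where "p = [:c:]" by (metis degree_eq_zeroE gr0I)
  then show False using assms by simp
qed

lemma abs_scaled_companion_mat_le_height:
  assumes "i < degree p" and "j < degree p"
  shows "\<bar>scaled_companion_mat p $$ (i, j)\<bar> \<le> int_poly_height p"
  using assms abs_coeff_le_int_poly_height[of p] abs_coeff_le_int_poly_height[of p "degree p"]
    order_trans[OF abs_ge_zero abs_coeff_le_int_poly_height[of p 0]]
  by (auto simp: scaled_companion_mat_def)

lemma int_poly_root_norm_sq_gap_lead_coeff:
  fixes p :: "int poly" and x :: complex
  assumes "p \<noteq> 0" and root: "poly (map_poly of_int p) x = 0" and "cmod x \<noteq> 1"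
  defines "d \<equiv> degree p" and "H \<equiv> int_poly_height p"
  shows "1 \<le> real_of_int (lead_coeff p) ^ 2 * \<bar>1 - (cmod x)^2\<bar>
    * ((real d ^ 2 + 1) * real_of_int H ^ 2) ^ (d * d - 1)"
proof -
  define a where "a = lead_coeff p"
  define B where "B = scaled_companion_mat p"
  define \<nu> where "\<nu> = (of_real ((real_of_int a * cmod x) ^ 2) :: complex)"
  have B: "B \<in> carrier_mat d d" using scaled_companion_mat_carrier by (simp add: B_def d_def)
  have "d > 0" using degree_pos_of_int_poly_root[OF \<open>p \<noteq> 0\<close> root] by (simp add: d_def)
  have "real_of_int a ^ 2 \<le> real_of_int H ^ 2"
    unfolding a_def H_def by (rule lead_coeff_sq_le_int_poly_height_sq)
  have "\<bar>kronecker_mat B B $$ (i, j)\<bar> \<le> H * H" if "i < d * d" "j < d * d" for i j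
    using abs_kronecker_mat_le[OF B B _ _ that] abs_scaled_companion_mat_le_height
    by (simp add: B_def d_def H_def)
  moreover have "eigenvalue (map_mat of_int (kronecker_mat B B)) \<nu>"
    using eigenvalue_kronecker_scaled_companion_mat[OF _ root] \<open>d > 0\<close>
    by (simp add: B_def a_def d_def \<nu>_def)
  moreover have "\<nu> \<noteq> of_int (a ^ 2)"
  proof
    assume "\<nu> = of_int (a ^ 2)"
    then have "(real_of_int a * cmod x) ^ 2 = real_of_int a ^ 2"
      unfolding \<nu>_def by (metis of_int_power of_real_eq_iff of_real_of_int_eq)
    then have "cmod x ^ 2 = 1" using \<open>p \<noteq> 0\<close> by (simp add: a_def power_mult_distrib)
    then show False using \<open>cmod x \<noteq> 1\<close> norm_ge_zero[of x] by (simp add: power2_eq_1_iff)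
  qed
  moreover have "\<bar>real_of_int (a ^ 2)\<bar> + real (d * d) * real_of_int (H * H) \<le> (real d ^ 2 + 1) * real_of_int H ^ 2"
    using \<open>real_of_int a ^ 2 \<le> real_of_int H ^ 2\<close> by (simp add: algebra_simps power2_eq_square)
  moreover have "1 \<le> (real d ^ 2 + 1) * real_of_int H ^ 2"
    using one_le_int_poly_height[OF \<open>p \<noteq> 0\<close>]
      mult_mono[of 1 "real d ^ 2 + 1" 1 "real_of_int H ^ 2"] by (simp add: H_def)
  ultimately have "1 \<le> cmod (of_int (a ^ 2) - \<nu>) * ((real d ^ 2 + 1) * real_of_int H ^ 2) ^ (d * d - 1)"
    using B by (intro int_mat_eigenvalue_separation[of _ "d * d"]) (auto simp: kronecker_mat_def)
  also have "cmod (of_int (a ^ 2) - \<nu>) = real_of_int a ^ 2 * \<bar>1 - cmod x ^ 2\<bar>"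
  proof -
    have "of_int (a ^ 2) - \<nu> = of_real (real_of_int a ^ 2 * (1 - cmod x ^ 2))"
      by (simp add: \<nu>_def algebra_simps power_mult_distrib)
    then show ?thesis by (simp only: norm_of_real abs_mult) simp
  qed
  finally show ?thesis by (simp add: a_def)
qed

lemma int_poly_root_norm_sq_gap:
  fixes p :: "int poly" and x :: complex
  assumes "p \<noteq> 0" and root: "poly (map_poly of_int p) x = 0" and "cmod x \<noteq> 1"
  defines "d \<equiv> degree p" and "H \<equiv> int_poly_height p"
  shows "1 \<le> \<bar>1 - (cmod x)^2\<bar> * (real d ^ 2 + 1) ^ (d ^ 2 - 1) * real_of_int H ^ (2 * d ^ 2)"
proof -
  define K where "K = (real d ^ 2 + 1) * real_of_int H ^ 2"
  have "d > 0" using degree_pos_of_int_poly_root[OF assms(1,2)] by (simp add: d_def)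
  have "real_of_int (lead_coeff p) ^ 2 \<le> real_of_int H ^ 2"
    unfolding H_def by (rule lead_coeff_sq_le_int_poly_height_sq)
  have "1 \<le> real_of_int (lead_coeff p) ^ 2 * \<bar>1 - (cmod x)^2\<bar> * K ^ (d * d - 1)"
    using int_poly_root_norm_sq_gap_lead_coeff[OF assms(1-3)] by (simp add: K_def d_def H_def)
  also have "\<dots> \<le> real_of_int H ^ 2 * \<bar>1 - (cmod x)^2\<bar> * K ^ (d * d - 1)"
    using \<open>real_of_int (lead_coeff p) ^ 2 \<le> real_of_int H ^ 2\<close>
    by (intro mult_right_mono) (simp_all add: K_def)
  also have "real_of_int H ^ 2 * \<bar>1 - (cmod x)^2\<bar> * K ^ (d * d - 1)
      = \<bar>1 - (cmod x)^2\<bar> * (real d ^ 2 + 1) ^ (d * d - 1) * (real_of_int H ^ 2) ^ (d * d)"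
    using \<open>d > 0\<close> by (simp add: K_def power_mult_distrib ac_simps flip: power_Suc)
  finally show ?thesis by (simp add: power_mult power2_eq_square)
qed

lemma three_power_lt_separation_constant:
  fixes d :: nat
  assumes "1 \<le> d"
  shows "3 * (real d ^ 2 + 1) ^ (d ^ 2 - 1) < sqrt 3 * (2 * real d + 2) ^ (2 * d + 3)
    * 2 ^ (2 * d) * fact d ^ (2 * d) * (real d + 1) ^ (2 * d * (d - 1))"
proof -
  define Q where "Q = (real d + 1) ^ (2 * d - 2)"
  define A where "A = (real d + 1) ^ (2 * d * (d - 1))"
  have "Q > 0" "A > 0" by (simp_all add: Q_def A_def)
  have "(real d ^ 2 + 1) ^ (d ^ 2 - 1) \<le> ((real d + 1) ^ 2) ^ (d ^ 2 - 1)"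
    by (intro power_mono) (simp_all add: power2_eq_square algebra_simps)
  also have "\<dots> = A * Q"
  proof -
    have "2 * (d ^ 2 - 1) = 2 * d * (d - 1) + (2 * d - 2)"
      using assms by (cases d) (simp_all add: power2_eq_square algebra_simps)
    then show ?thesis by (simp add: A_def Q_def flip: power_mult power_add)
  qed
  finally have "3 * (real d ^ 2 + 1) ^ (d ^ 2 - 1) < 32 * Q * A"
    using mult_pos_pos[OF \<open>A > 0\<close> \<open>Q > 0\<close>] by (simp add: mult.commute mult.left_commute)
  also have "32 * Q \<le> (2 * real d + 2) ^ (2 * d + 3)"
  proof -
    have "(2::real) ^ 5 \<le> (real d + 1) ^ 5" using assms by (intro power_mono) simp_all
    then have "32 * Q \<le> Q * (real d + 1) ^ 5" using \<open>Q > 0\<close> by simp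
    also have "\<dots> = (real d + 1) ^ (2 * d + 3)"
      using assms by (simp add: Q_def flip: power_add)
    also have "\<dots> \<le> (2 * real d + 2) ^ (2 * d + 3)" by (intro power_mono) simp_all
    finally show ?thesis .
  qed
  then have "32 * Q * A \<le> (2 * real d + 2) ^ (2 * d + 3) * A"
    using \<open>A > 0\<close> by (intro mult_right_mono) simp_all
  also have "\<dots> \<le> sqrt 3 * (2 * real d + 2) ^ (2 * d + 3) * 2 ^ (2 * d) * fact d ^ (2 * d) * A"
  proof -
    have "1 \<le> sqrt 3 * 2 ^ (2 * d) * (fact d :: real) ^ (2 * d)"
      using mult_mono[of 1 "sqrt 3 * 2 ^ (2 * d)" 1 "(fact d :: real) ^ (2 * d)"]
        mult_mono[of 1 "sqrt 3" 1 "2 ^ (2 * d) :: real"]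
      by (simp add: one_le_power)
    then show ?thesis
      using \<open>A > 0\<close> mult_left_mono[of 1 _ "(2 * real d + 2) ^ (2 * d + 3) * A"] by (simp add: ac_simps)
  qed
  finally show ?thesis by (simp add: A_def)
qed

lemma one_le_three_abs_diff_one_mult:
  fixes m E :: real
  assumes "0 \<le> m" and "1 \<le> E" and "1 \<le> \<bar>1 - m ^ 2\<bar> * E"
  shows "1 \<le> 3 * \<bar>m - 1\<bar> * E"
proof (cases "m \<le> 2")
  case True
  have "1 - m ^ 2 = (1 - m) * (1 + m)" by (simp add: algebra_simps power2_eq_square)
  then have "\<bar>1 - m ^ 2\<bar> = \<bar>m - 1\<bar> * (1 + m)"
    using \<open>0 \<le> m\<close> by (simp add: abs_mult abs_minus_commute)
  also have "\<dots> \<le> 3 * \<bar>m - 1\<bar>" using True by (subst mult.commute) (intro mult_right_mono, simp_all)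
  finally show ?thesis using assms(2,3) by (meson mult_right_mono order_trans zero_le_one)
next
  case False
  then show ?thesis using mult_mono[of 1 "3 * \<bar>m - 1\<bar>" 1 E] assms(2) by simp
qed

theorem mainTheorem3:
  fixes x :: complex and p :: "int poly" and d :: nat and H :: int
  assumes "is_min_int_poly p x"
    and "d = degree p"
    and "H = int_poly_height p"
    and "cmod x \<noteq> 1"
  shows "\<bar>cmod x - 1\<bar> >
    1 / (sqrt 3 * (2 * real d + 2) ^ (2 * d + 3) * 2 ^ (2 * d) * (fact d) ^ (2 * d)
         * (real d + 1) ^ (2 * d * (d - 1)) * (real_of_int H) ^ (2 * d ^ 2))"
proof -
  have "p \<noteq> 0" and root: "poly (map_poly of_int p) x = 0"
    using assms(1) by (auto simp: is_min_int_poly_def)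
  have "1 \<le> d" using degree_pos_of_int_poly_root[OF \<open>p \<noteq> 0\<close> root] assms(2) by simp
  have "1 \<le> H" using one_le_int_poly_height[OF \<open>p \<noteq> 0\<close>] assms(3) by simp
  define E where "E = (real d ^ 2 + 1) ^ (d ^ 2 - 1) * real_of_int H ^ (2 * d ^ 2)"
  define D where "D = sqrt 3 * (2 * real d + 2) ^ (2 * d + 3) * 2 ^ (2 * d) * (fact d) ^ (2 * d)
         * (real d + 1) ^ (2 * d * (d - 1)) * (real_of_int H) ^ (2 * d ^ 2)"
  have "1 \<le> E"
    using \<open>1 \<le> H\<close> mult_mono[of 1 "(real d ^ 2 + 1) ^ (d ^ 2 - 1)" 1 "real_of_int H ^ (2 * d ^ 2)"]
    by (simp add: E_def one_le_power)
  have "3 * E < D"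
    using three_power_lt_separation_constant[OF \<open>1 \<le> d\<close>] \<open>1 \<le> H\<close>
    unfolding E_def D_def by (simp add: mult.assoc[symmetric] mult_strict_right_mono)
  have "1 \<le> \<bar>1 - (cmod x)^2\<bar> * E"
    using int_poly_root_norm_sq_gap[OF \<open>p \<noteq> 0\<close> root assms(4)]
    by (simp add: E_def assms(2,3) mult.assoc)
  then have "1 \<le> 3 * \<bar>cmod x - 1\<bar> * E"
    using one_le_three_abs_diff_one_mult \<open>1 \<le> E\<close> by simp
  also have "\<dots> < \<bar>cmod x - 1\<bar> * D"
    using \<open>3 * E < D\<close> assms(4) by simp
  finally show ?thesis using \<open>3 * E < D\<close> \<open>1 \<le> E\<close> by (simp add: D_def divide_less_eq mult.commute)
qed

end
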